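(* $\mathfrak{mc}(\mathsf{meager},\subseteq)=\operatorname{non}(\mathsf{meager})$ and $\mathfrak{mac}(\mathsf{meager}\setminus\{\emptyset\},\subseteq)=\mathfrak{c}$.
   Context: $\mathsf{meager}$ is the ideal of meager subsets of $2^\omega$, ordered by inclusion. For a poset $P$, a chain (antichain) is a set of pairwise comparable (pairwise incomparable) elements; $\mathfrak{mc}(P)$ and $\mathfrak{mac}(P)$ are the minimal cardinalities of a maximal (under inclusion) chain and of a maximal antichain, respectively. $\operatorname{non}(\mathsf{meager})$ is the minimal size of a non-meager subset of $2^\omega$. $\mathfrak{c}=2^{\aleph_0}$. *)

theory Defs
  imports "HOL-Analysis.Analysis" "HOL-Library.Equipollence"
begin

text \<open>The Cantor space 2^omega is the type nat => bool with its product topology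
  (bool carries the discrete topology in the library).\<close>

definition nowhere_dense :: "(nat \<Rightarrow> bool) set \<Rightarrow> bool" where
  "nowhere_dense A \<longleftrightarrow> interior (closure A) = {}"

definition meager :: "(nat \<Rightarrow> bool) set \<Rightarrow> bool" where
  "meager A \<longleftrightarrow> (\<exists>F. countable F \<and> (\<forall>N\<in>F. nowhere_dense N) \<and> A \<subseteq> \<Union>F)"

definition meager_ideal :: "(nat \<Rightarrow> bool) set set" where
  "meager_ideal = {A. meager A}"

definition is_chain :: "'a set set \<Rightarrow> 'a set set \<Rightarrow> bool" where
  "is_chain P C \<longleftrightarrow> C \<subseteq> P \<and> (\<forall>x\<in>C. \<forall>y\<in>C. x \<subseteq> y \<or> y \<subseteq> x)"

definition is_max_chain :: "'a set set \<Rightarrow> 'a set set \<Rightarrow> bool" where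
  "is_max_chain P C \<longleftrightarrow> is_chain P C \<and> (\<forall>D. is_chain P D \<and> C \<subseteq> D \<longrightarrow> D = C)"

definition is_antichain :: "'a set set \<Rightarrow> 'a set set \<Rightarrow> bool" where
  "is_antichain P C \<longleftrightarrow> C \<subseteq> P \<and> (\<forall>x\<in>C. \<forall>y\<in>C. x \<noteq> y \<longrightarrow> \<not> x \<subseteq> y \<and> \<not> y \<subseteq> x)"

definition is_max_antichain :: "'a set set \<Rightarrow> 'a set set \<Rightarrow> bool" where
  "is_max_antichain P C \<longleftrightarrow> is_antichain P C \<and> (\<forall>D. is_antichain P D \<and> C \<subseteq> D \<longrightarrow> D = C)"

end

(*
  A meager set M is disjoint from a meager copy of the Cantor space: enumerate nowhere dense
  sets N_i covering M and map x to the sequence x_0 u_0 0 x_1 u_1 0 ..., where the block u_i is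
  chosen, by finitely many extensions, so that every point continuing a prefix of length i
  through u_i misses N_i.  The zeros after the blocks make the image nowhere dense.

  Hence the union of a maximal chain in the meager ideal is not meager, and it injects into
  the chain because each point is determined by the least member containing it; conversely
  the meager initial segments of a well-order of a non-meager set N of least size form a
  maximal chain of size at most |N|.  Singletons form a maximal antichain of size continuum.
  If a maximal antichain A were smaller, then for a member a and a meager P of size continuum
  disjoint from a, the members separating the points p of a from a - {p} would all contain
  the large set left from P after removing one point of each other member outside a; so A
  has a member of size continuum, which injects into A.
*)
theory Submission
  imports Defs
begin

section \<open>Cylinders and nowhere dense sets in Cantor space\<close>

definition cylinder :: "bool list \<Rightarrow> (nat \<Rightarrow> bool) set" where
  "cylinder t = {f. \<forall>i<length t. f i = t ! i}"

lemma open_cylinder: "open (cylinder t)"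
proof -
  have "cylinder t = {f. \<forall>i\<in>{..<length t}. f (id i) \<in> {t ! i}}"
    by (auto simp: cylinder_def)
  also have "open \<dots>"
    by (rule product_topology_basis') (auto simp: open_discrete)
  finally show ?thesis .
qed

lemma cylinder_nth: "f \<in> cylinder t \<Longrightarrow> i < length t \<Longrightarrow> f i = t ! i"
  by (simp add: cylinder_def)

lemma cylinder_append_subset: "cylinder (t @ u) \<subseteq> cylinder t"
  by (auto simp: cylinder_def nth_append)

lemma cylinder_nonempty: "cylinder t \<noteq> {}"
proof -
  have "(\<lambda>i. i < length t \<and> t ! i) \<in> cylinder t"
    by (auto simp: cylinder_def)
  then show ?thesis by blast
qed

lemma cylinder_prefix_eq_append:
  assumes "f \<in> cylinder t" "length t \<le> n"
  shows "map f [0..<n] = t @ map f [length t..<n]"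
proof -
  have "map f [0..<length t] = t"
    using assms(1) by (auto simp: cylinder_def intro: nth_equalityI)
  moreover have "[0..<n] = [0..<length t] @ [length t..<n]"
    using upt_add_eq_append[of 0 "length t" "n - length t"] assms(2) by simp
  ultimately show ?thesis by simp
qed

lemma open_contains_cylinder:
  assumes "open U" "f \<in> U"
  obtains n where "\<And>m. n \<le> m \<Longrightarrow> cylinder (map f [0..<m]) \<subseteq> U"
proof -
  have "openin (product_topology (\<lambda>i. euclidean) UNIV) U"
    using assms(1) by (simp add: open_fun_def)
  from product_topology_open_contains_basis[OF this assms(2)]
  obtain X where X: "f \<in> (\<Pi>\<^sub>E i\<in>UNIV. X i)" "finite {i. X i \<noteq> UNIV}" "(\<Pi>\<^sub>E i\<in>UNIV. X i) \<subseteq> U"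
    by auto
  obtain n where n: "{i. X i \<noteq> UNIV} \<subseteq> {..<n}"
    using finite_nat_bounded[OF X(2)] by (elim exE)
  show ?thesis
  proof (rule that)
    fix m assume "n \<le> m"
    have "g \<in> (\<Pi>\<^sub>E i\<in>UNIV. X i)" if "g \<in> cylinder (map f [0..<m])" for g
    proof -
      have "g i \<in> X i" for i
      proof (cases "X i = UNIV")
        case False
        then have "i < m" using n \<open>n \<le> m\<close> by auto
        then have "g i = f i" using that by (simp add: cylinder_def)
        then show ?thesis using X(1) by auto
      qed simp
      then show ?thesis by (simp add: PiE_iff)
    qed
    with X(3) show "cylinder (map f [0..<m]) \<subseteq> U" by blast
  qed
qed

lemma cylinder_subset_closure:
  assumes meets: "\<And>u. cylinder (t @ u) \<inter> A \<noteq> {}"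
  shows "cylinder t \<subseteq> closure A"
proof
  fix f assume f: "f \<in> cylinder t"
  show "f \<in> closure A"
  proof (rule ccontr)
    assume "f \<notin> closure A"
    then obtain n where n: "\<And>m. n \<le> m \<Longrightarrow> cylinder (map f [0..<m]) \<subseteq> - closure A"
      using open_contains_cylinder[of "- closure A" f] by auto
    define m where "m = max n (length t)"
    have "cylinder (t @ map f [length t..<m]) = cylinder (map f [0..<m])"
      using cylinder_prefix_eq_append[OF f, of m] by (simp add: m_def)
    also have "\<dots> \<subseteq> - A"
      using n[of m] closure_subset by (auto simp: m_def)
    finally show False
      using meets[of "map f [length t..<m]"] by blast
  qed
qed

lemma nowhere_dense_iff_cylinder:
  "nowhere_dense A \<longleftrightarrow> (\<forall>t. \<exists>u. cylinder (t @ u) \<inter> A = {})"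
proof
  assume nd: "nowhere_dense A"
  show "\<forall>t. \<exists>u. cylinder (t @ u) \<inter> A = {}"
  proof (rule allI, rule ccontr)
    fix t assume "\<nexists>u. cylinder (t @ u) \<inter> A = {}"
    then have "cylinder t \<subseteq> closure A"
      by (intro cylinder_subset_closure) simp
    then have "cylinder t \<subseteq> interior (closure A)"
      by (rule interior_maximal[OF _ open_cylinder])
    with nd cylinder_nonempty[of t] show False
      unfolding nowhere_dense_def by simp
  qed
next
  assume ext: "\<forall>t. \<exists>u. cylinder (t @ u) \<inter> A = {}"
  show "nowhere_dense A"
    unfolding nowhere_dense_def
  proof (rule ccontr)
    assume "interior (closure A) \<noteq> {}"
    then obtain f where "f \<in> interior (closure A)" by blast
    then obtain n where "\<And>m. n \<le> m \<Longrightarrow> cylinder (map f [0..<m]) \<subseteq> interior (closure A)"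
      using open_contains_cylinder[OF open_interior] by auto
    then have n: "cylinder (map f [0..<n]) \<subseteq> interior (closure A)"
      by simp
    obtain u where u: "cylinder (map f [0..<n] @ u) \<inter> A = {}"
      using ext by blast
    have "cylinder (map f [0..<n] @ u) \<inter> closure A = {}"
      using open_Int_closure_eq_empty[OF open_cylinder] u by simp
    moreover have "cylinder (map f [0..<n] @ u) \<subseteq> closure A"
      using n cylinder_append_subset interior_subset by (meson subset_trans)
    ultimately show False
      using cylinder_nonempty by (metis inf.absorb_iff1)
  qed
qed

lemma nowhere_dense_common_extension:
  assumes "nowhere_dense A" "finite T"
  shows "\<exists>w. \<forall>t\<in>T. cylinder (t @ w) \<inter> A = {}"
  using assms(2)
proof (induction T rule: finite_induct)
  case empty then show ?case by simp
next
  case (insert t T)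
  then obtain w where w: "\<forall>s\<in>T. cylinder (s @ w) \<inter> A = {}" by blast
  obtain v where v: "cylinder ((t @ w) @ v) \<inter> A = {}"
    using assms(1) unfolding nowhere_dense_iff_cylinder by blast
  have "cylinder (s @ w @ v) \<inter> A = {}" if "s \<in> insert t T" for s
  proof (cases "s = t")
    case False
    with that w have "cylinder (s @ w) \<inter> A = {}" by simp
    then show ?thesis
      using cylinder_append_subset[of "s @ w" v] by auto
  qed (use v in simp)
  then show ?case by blast
qed

lemma nowhere_dense_singleton: "nowhere_dense {f}"
  unfolding nowhere_dense_iff_cylinder
proof
  fix t
  have "f \<notin> cylinder (t @ [\<not> f (length t)])"
  proof
    assume "f \<in> cylinder (t @ [\<not> f (length t)])"
    then have "f (length t) = (t @ [\<not> f (length t)]) ! length t"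
      by (rule cylinder_nth) simp
    then show False by simp
  qed
  then show "\<exists>u. cylinder (t @ u) \<inter> {f} = {}"
    by (intro exI[of _ "[\<not> f (length t)]"]) simp
qed

lemma meager_subset:
  assumes "meager B" "A \<subseteq> B"
  shows "meager A"
proof -
  obtain F where "countable F" "\<forall>N\<in>F. nowhere_dense N" "B \<subseteq> \<Union>F"
    using assms(1) unfolding meager_def by blast
  with assms(2) show ?thesis
    unfolding meager_def by (intro exI[of _ F] conjI) auto
qed

lemma meager_Un:
  assumes "meager A" "meager B"
  shows "meager (A \<union> B)"
proof -
  obtain F G where "countable F" "\<forall>N\<in>F. nowhere_dense N" "A \<subseteq> \<Union>F"
    and "countable G" "\<forall>N\<in>G. nowhere_dense N" "B \<subseteq> \<Union>G"
    using assms unfolding meager_def by blast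
  then show ?thesis
    unfolding meager_def by (intro exI[of _ "F \<union> G"]) auto
qed

lemma meager_if_nowhere_dense: "nowhere_dense A \<Longrightarrow> meager A"
  unfolding meager_def by (intro exI[of _ "{A}"]) simp

lemma meager_singleton: "meager {f}"
  by (rule meager_if_nowhere_dense[OF nowhere_dense_singleton])

section \<open>A meager copy of Cantor space avoiding a meager set\<close>

definition weave :: "(nat \<Rightarrow> bool list) \<Rightarrow> bool list \<Rightarrow> bool list" where
  "weave u \<sigma> = concat (map (\<lambda>i. \<sigma> ! i # u i @ [False]) [0..<length \<sigma>])"

definition block_start :: "(nat \<Rightarrow> bool list) \<Rightarrow> nat \<Rightarrow> nat" where
  "block_start u n = (\<Sum>i<n. length (u i) + 2)"

lemma weave_snoc: "weave u (\<sigma> @ [b]) = weave u \<sigma> @ b # u (length \<sigma>) @ [False]"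
  unfolding weave_def by (auto simp: nth_append intro!: arg_cong[where f = concat] map_cong)

lemma length_weave: "length (weave u \<sigma>) = block_start u (length \<sigma>)"
  unfolding weave_def block_start_def
  by (simp add: length_concat sum_list_sum_nth atLeast0LessThan)

lemma block_start_ge: "2 * n \<le> block_start u n"
  unfolding block_start_def by (induction n) auto

lemma weave_prefix:
  assumes "n \<le> m"
  shows "\<exists>r. weave u (map x [0..<m]) = weave u (map x [0..<n]) @ r"
  using assms
proof (induction m rule: dec_induct)
  case base
  show ?case by (rule exI[of _ "[]"]) simp
next
  case (step m)
  then obtain r where "weave u (map x [0..<m]) = weave u (map x [0..<n]) @ r"
    by blast
  then have "weave u (map x [0..<Suc m]) = weave u (map x [0..<n]) @ r @ x m # u m @ [False]"
    by (simp add: weave_snoc)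
  then show ?case by blast
qed

definition weave_limit :: "(nat \<Rightarrow> bool list) \<Rightarrow> (nat \<Rightarrow> bool) \<Rightarrow> nat \<Rightarrow> bool" where
  "weave_limit u x k = weave u (map x [0..<Suc k]) ! k"

lemma weave_limit_in_cylinder: "weave_limit u x \<in> cylinder (weave u (map x [0..<n]))"
  unfolding cylinder_def
proof (intro CollectI allI impI)
  fix k assume k: "k < length (weave u (map x [0..<n]))"
  let ?m = "max n (Suc k)"
  obtain r where r: "weave u (map x [0..<?m]) = weave u (map x [0..<n]) @ r"
    using weave_prefix[of n ?m] by auto
  obtain r' where r': "weave u (map x [0..<?m]) = weave u (map x [0..<Suc k]) @ r'"
    using weave_prefix[of "Suc k" ?m] by auto
  have "k < length (weave u (map x [0..<Suc k]))"
    using block_start_ge[of "Suc k" u] by (simp add: length_weave)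
  then have "weave_limit u x k = weave u (map x [0..<?m]) ! k"
    by (simp add: weave_limit_def r' nth_append)
  also have "\<dots> = weave u (map x [0..<n]) ! k"
    using k by (simp add: r nth_append)
  finally show "weave_limit u x k = weave u (map x [0..<n]) ! k" .
qed

lemma weave_limit_in_block_cylinder:
  "weave_limit u x \<in> cylinder (weave u (map x [0..<i]) @ x i # u i @ [False])"
  using weave_limit_in_cylinder[of u x "Suc i"] by (simp add: weave_snoc)

lemma weave_limit_block_start: "weave_limit u x (block_start u i) = x i"
  using weave_limit_in_block_cylinder[of u x i] by (simp add: cylinder_def length_weave nth_append)

lemma weave_limit_block_end: "weave_limit u x (block_start u i + length (u i) + 1) = False"
  using weave_limit_in_block_cylinder[of u x i] by (simp add: cylinder_def length_weave nth_append)

lemma inj_weave_limit: "inj (weave_limit u)"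
proof (rule injI, rule ext)
  fix x y i assume "weave_limit u x = weave_limit u y"
  then show "x i = y i"
    using weave_limit_block_start[of u x i] weave_limit_block_start[of u y i] by simp
qed

text \<open>Every point of the range has a 0 at the end of each block, so a prefix is extended
  to avoid the range by a 1 at the next such position.\<close>
lemma nowhere_dense_range_weave_limit: "nowhere_dense (range (weave_limit u))"
  unfolding nowhere_dense_iff_cylinder
proof
  fix t :: "bool list"
  let ?p = "block_start u (length t) + length (u (length t)) + 1"
  let ?w = "replicate (?p - length t) False @ [True]"
  have p: "length t \<le> ?p"
    using block_start_ge[of "length t" u] by simp
  have "weave_limit u x \<notin> cylinder (t @ ?w)" for x
  proof
    assume "weave_limit u x \<in> cylinder (t @ ?w)"
    moreover have "?p < length (t @ ?w)" "(t @ ?w) ! ?p"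
      using p by (simp_all add: nth_append)
    ultimately show False
      using weave_limit_block_end[of u x "length t"] by (auto simp: cylinder_def)
  qed
  then show "\<exists>w. cylinder (t @ w) \<inter> range (weave_limit u) = {}" by blast
qed

lemma weave_limit_notin:
  assumes "\<And>\<sigma> b. length \<sigma> = i \<Longrightarrow> cylinder (weave u \<sigma> @ b # u i) \<inter> A = {}"
  shows "weave_limit u x \<notin> A"
proof -
  have "weave_limit u x \<in> cylinder ((weave u (map x [0..<i]) @ x i # u i) @ [False])"
    using weave_limit_in_block_cylinder[of u x i] by simp
  then have "weave_limit u x \<in> cylinder (weave u (map x [0..<i]) @ x i # u i)"
    using cylinder_append_subset by blast
  with assms[of "map x [0..<i]" "x i"] show ?thesis by auto
qed

lemma avoiding_block_exists:
  assumes "nowhere_dense A"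
  shows "\<exists>w. \<forall>\<sigma> b. length \<sigma> = i \<longrightarrow> cylinder (weave u \<sigma> @ b # w) \<inter> A = {}"
proof -
  let ?T = "(\<lambda>(\<sigma>, b). weave u \<sigma> @ [b]) ` ({\<sigma>. length \<sigma> = i} \<times> UNIV)"
  have "finite {\<sigma> :: bool list. length \<sigma> = i}"
    using finite_lists_length_eq[of "UNIV :: bool set" i] by simp
  then have "finite ?T" by simp
  with assms obtain w where "\<forall>t\<in>?T. cylinder (t @ w) \<inter> A = {}"
    using nowhere_dense_common_extension by blast
  then have "cylinder (weave u \<sigma> @ b # w) \<inter> A = {}" if "length \<sigma> = i" for \<sigma> b
    using that by force
  then show ?thesis by blast
qed

text \<open>The block \<open>u i\<close> may depend on the earlier blocks only, so the blocks are built as a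
  list by primitive recursion.\<close>
lemma avoiding_blocks_exist:
  assumes "\<And>i. nowhere_dense (N i)"
  obtains u where "\<And>i \<sigma> b. length \<sigma> = i \<Longrightarrow> cylinder (weave u \<sigma> @ b # u i) \<inter> N i = {}"
proof -
  define avoids where
    "avoids i us w \<longleftrightarrow> (\<forall>\<sigma> b. length \<sigma> = i \<longrightarrow> cylinder (weave ((!) us) \<sigma> @ b # w) \<inter> N i = {})"
    for i us w
  define blocks where "blocks = rec_nat [] (\<lambda>i us. us @ [SOME w. avoids i us w])"
  define u where "u i = blocks (Suc i) ! i" for i
  have blocks_Suc: "blocks (Suc i) = blocks i @ [SOME w. avoids i (blocks i) w]" for i
    by (simp add: blocks_def)
  have length_blocks: "length (blocks i) = i" for i
    by (induction i) (simp_all add: blocks_def blocks_Suc)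
  have nth_blocks: "blocks i ! j = u j" if "j < i" for i j
    using that by (induction i) (auto simp: blocks_Suc u_def nth_append length_blocks less_Suc_eq)
  show ?thesis
  proof (rule that)
    fix i and \<sigma> :: "bool list" and b assume \<sigma>: "length \<sigma> = i"
    have "avoids i (blocks i) (SOME w. avoids i (blocks i) w)"
      using avoiding_block_exists[OF assms] unfolding avoids_def by (rule someI_ex)
    moreover have "(SOME w. avoids i (blocks i) w) = u i"
      by (simp add: u_def blocks_Suc nth_append length_blocks)
    moreover have "weave ((!) (blocks i)) \<sigma> = weave u \<sigma>"
      unfolding weave_def using \<sigma> by (auto simp: nth_blocks intro!: arg_cong[where f = concat])
    ultimately show "cylinder (weave u \<sigma> @ b # u i) \<inter> N i = {}"
      using \<sigma> unfolding avoids_def by metis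
  qed
qed

lemma meager_disjoint_eqpoll_UNIV:
  assumes "meager M"
  obtains P where "meager P" "P \<inter> M = {}" "P \<approx> (UNIV :: (nat \<Rightarrow> bool) set)"
proof -
  obtain F where F: "countable F" "\<forall>A\<in>F. nowhere_dense A" "M \<subseteq> \<Union>F"
    using assms unfolding meager_def by blast
  define N where "N = from_nat_into (insert {} F)"
  have range_N: "range N = insert {} F"
    unfolding N_def using F(1) by (simp add: range_from_nat_into)
  have "nowhere_dense (N i)" for i
  proof -
    have "N i \<in> insert {} F"
      using range_N by (metis rangeI)
    then show ?thesis
      using F(2) by (auto simp: nowhere_dense_def)
  qed
  then obtain u where u: "\<And>i \<sigma> b. length \<sigma> = i \<Longrightarrow> cylinder (weave u \<sigma> @ b # u i) \<inter> N i = {}"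
    using avoiding_blocks_exist by blast
  have "weave_limit u x \<notin> M" for x
  proof
    assume "weave_limit u x \<in> M"
    then have "weave_limit u x \<in> \<Union>(range N)"
      using F(3) unfolding range_N by blast
    then obtain i where "weave_limit u x \<in> N i"
      by blast
    with weave_limit_notin[OF u] show False by blast
  qed
  then have "range (weave_limit u) \<inter> M = {}"
    by blast
  moreover have "range (weave_limit u) \<approx> (UNIV :: (nat \<Rightarrow> bool) set)"
    by (rule inj_on_image_eqpoll_self) (simp add: inj_weave_limit)
  ultimately show ?thesis
    using that meager_if_nowhere_dense[OF nowhere_dense_range_weave_limit] by blast
qed

lemma not_meager_UNIV: "\<not> meager (UNIV :: (nat \<Rightarrow> bool) set)"
  by (metis Int_UNIV_right eqpoll_empty_iff_empty eqpoll_sym meager_disjoint_eqpoll_UNIV UNIV_not_empty)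

section \<open>Maximal chains and antichains in ideals of sets\<close>

unbundle cardinal_syntax

lemma lepoll_iff_card_of_ordLeq: "A \<lesssim> B \<longleftrightarrow> |A| \<le>o |B|"
  unfolding lepoll_def card_of_ordLeq[symmetric] by simp

lemma not_lepoll_iff_ordLess: "\<not> A \<lesssim> B \<longleftrightarrow> |B| <o |A|"
  unfolding lepoll_iff_card_of_ordLeq
  using ordLess_or_ordLeq[OF card_of_Well_order card_of_Well_order] not_ordLess_ordLeq by blast

lemma exists_lepoll_least:
  assumes "P X"
  obtains N where "P N" "\<And>N'. P N' \<Longrightarrow> N \<lesssim> N'"
proof -
  have "wf (inv_image ordLess (card_of :: 'a set \<Rightarrow> _))"
    by (rule wf_inv_image[OF wf_ordLess])
  then obtain N where N: "N \<in> Collect P"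
    and least: "\<And>N'. (N', N) \<in> inv_image ordLess card_of \<Longrightarrow> N' \<notin> Collect P"
    using wfE_min[of _ X "Collect P"] assms by blast
  show ?thesis
  proof (rule that)
    show "P N" using N by simp
    show "N \<lesssim> N'" if "P N'" for N'
    proof (rule ccontr)
      assume "\<not> N \<lesssim> N'"
      then have "(N', N) \<in> inv_image ordLess card_of"
        by (simp add: not_lepoll_iff_ordLess)
      with least that show False by simp
    qed
  qed
qed

lemma lepoll_Diff:
  assumes "infinite X" "X \<lesssim> P" "\<not> X \<lesssim> Q"
  shows "X \<lesssim> P - Q"
proof (rule ccontr)
  assume "\<not> X \<lesssim> P - Q"
  then have "|P - Q| <o |X|" "|Q| <o |X|"
    using assms(3) by (simp_all add: not_lepoll_iff_ordLess)
  then have "|(P - Q) \<union> Q| <o |X|"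
    by (rule card_of_Un_ordLess_infinite[OF assms(1)])
  moreover have "X \<lesssim> (P - Q) \<union> Q"
    using assms(2) by (rule lepoll_trans) (rule subset_imp_lepoll, blast)
  ultimately show False
    by (simp add: not_lepoll_iff_ordLess[symmetric])
qed

lemma (in wo_rel) ofilter_if_comparable_with_under:
  assumes comparable: "\<And>a. a \<in> Field r \<Longrightarrow> under a \<subseteq> M \<or> M \<subseteq> under a"
    and proper: "\<not> Field r \<subseteq> M"
  shows "ofilter M"
  unfolding ofilter_def
proof
  obtain a where a: "a \<in> Field r" "a \<notin> M"
    using proper by blast
  have "a \<in> under a"
    by (rule Refl_under_in[OF REFL a(1)])
  with a have "M \<subseteq> under a"
    using comparable[OF a(1)] by blast
  then show "M \<subseteq> Field r"
    using under_Field[of r a] by (rule subset_trans)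
  show "\<forall>x\<in>M. under x \<subseteq> M"
  proof (intro ballI subsetI)
    fix x y assume x: "x \<in> M" and "y \<in> under x"
    then have yx: "(y, x) \<in> r"
      by (simp add: under_def)
    then have y: "y \<in> Field r"
      by (rule FieldI1)
    show "y \<in> M"
    proof (cases "under y \<subseteq> M")
      case True
      then show ?thesis
        using Refl_under_in[OF REFL y] by blast
    next
      case False
      then have "x \<in> under y"
        using comparable[OF y] x by blast
      then have "x = y"
        using antisymD[OF ANTISYM yx] by (simp add: under_def)
      with x show ?thesis by simp
    qed
  qed
qed

lemma max_chain_memberI:
  assumes "is_max_chain P C" "X \<in> P" "\<forall>c\<in>C. c \<subseteq> X \<or> X \<subseteq> c"
  shows "X \<in> C"
proof -
  have "is_chain P (insert X C)"
    using assms unfolding is_max_chain_def is_chain_def by auto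
  then show ?thesis
    using assms(1) unfolding is_max_chain_def by blast
qed

lemma max_antichain_comparable:
  assumes "is_max_antichain P A" "X \<in> P"
  obtains a where "a \<in> A" "a \<subseteq> X \<or> X \<subseteq> a"
proof (rule ccontr)
  assume "\<not> thesis"
  then have "\<forall>a\<in>A. \<not> a \<subseteq> X \<and> \<not> X \<subseteq> a"
    using that by blast
  then have "is_antichain P (insert X A)"
    using assms unfolding is_max_antichain_def is_antichain_def by auto
  then have "X \<in> A"
    using assms(1) unfolding is_max_antichain_def by blast
  with \<open>\<forall>a\<in>A. \<not> a \<subseteq> X \<and> \<not> X \<subseteq> a\<close> show False by blast
qed

lemma max_antichain_mem: "is_max_antichain P A \<Longrightarrow> a \<in> A \<Longrightarrow> a \<in> P"
  unfolding is_max_antichain_def is_antichain_def by blast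

lemma max_antichain_subset_imp_eq:
  "is_max_antichain P A \<Longrightarrow> b \<in> A \<Longrightarrow> c \<in> A \<Longrightarrow> b \<subseteq> c \<Longrightarrow> b = c"
  unfolding is_max_antichain_def is_antichain_def by blast

locale proper_set_ideal =
  fixes I :: "'a set set"
  assumes ideal_subset: "B \<in> I \<Longrightarrow> A \<subseteq> B \<Longrightarrow> A \<in> I"
    and ideal_Un: "A \<in> I \<Longrightarrow> B \<in> I \<Longrightarrow> A \<union> B \<in> I"
    and singleton_in_ideal: "{x} \<in> I"
    and UNIV_notin_ideal: "UNIV \<notin> I"
begin

lemma insert_in_ideal: "A \<in> I \<Longrightarrow> insert x A \<in> I"
  using ideal_Un[OF singleton_in_ideal] by (metis insert_is_Un)

lemma Union_max_chain_notin:
  assumes C: "is_max_chain I C"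
  shows "\<Union>C \<notin> I"
proof
  assume "\<Union>C \<in> I"
  then have "\<Union>C \<noteq> UNIV"
    using UNIV_notin_ideal by auto
  then obtain x where "x \<notin> \<Union>C"
    by blast
  moreover have "insert x (\<Union>C) \<in> C"
    using max_chain_memberI[OF C insert_in_ideal[OF \<open>\<Union>C \<in> I\<close>]] by blast
  ultimately show False
    by blast
qed

lemma Inter_max_chain_mem:
  assumes C: "is_max_chain I C" and "D \<subseteq> C" "D \<noteq> {}"
  shows "\<Inter>D \<in> C"
proof (rule max_chain_memberI[OF C])
  obtain d where "d \<in> D" using \<open>D \<noteq> {}\<close> by blast
  with C \<open>D \<subseteq> C\<close> show "\<Inter>D \<in> I"
    unfolding is_max_chain_def is_chain_def by (meson Inter_lower ideal_subset subsetD)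
  show "\<forall>c\<in>C. c \<subseteq> \<Inter>D \<or> \<Inter>D \<subseteq> c"
    using C \<open>D \<subseteq> C\<close> unfolding is_max_chain_def is_chain_def by blast
qed

text \<open>The least member of \<open>C\<close> containing \<open>x\<close> determines \<open>x\<close>: removing \<open>x\<close> from
  it leaves another member of \<open>C\<close>.\<close>
lemma Union_max_chain_lepoll:
  assumes C: "is_max_chain I C"
  shows "\<Union>C \<lesssim> C"
proof -
  have in_ideal: "c \<in> I" if "c \<in> C" for c
    using C that unfolding is_max_chain_def is_chain_def by blast
  have comparable: "c \<subseteq> d \<or> d \<subseteq> c" if "c \<in> C" "d \<in> C" for c d
    using C that unfolding is_max_chain_def is_chain_def by blast
  define least where "least x = \<Inter>{c\<in>C. x \<in> c}" for x
  have least_mem: "least x \<in> C" if "x \<in> \<Union>C" for x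
    unfolding least_def using that by (intro Inter_max_chain_mem[OF C]) auto
  have in_least: "x \<in> least x" for x
    by (simp add: least_def)
  have least_minus_mem: "least x - {x} \<in> C" if x: "x \<in> \<Union>C" for x
  proof (rule max_chain_memberI[OF C])
    show "least x - {x} \<in> I"
      using ideal_subset[OF in_ideal[OF least_mem[OF x]]] by blast
    show "\<forall>c\<in>C. c \<subseteq> least x - {x} \<or> least x - {x} \<subseteq> c"
    proof
      fix c assume c: "c \<in> C"
      show "c \<subseteq> least x - {x} \<or> least x - {x} \<subseteq> c"
      proof (cases "x \<in> c")
        case True
        then have "least x \<subseteq> c"
          using c by (auto simp: least_def)
        then show ?thesis by blast
      next
        case False
        then have "c \<subseteq> least x"
          using comparable[OF c least_mem[OF x]] in_least[of x] by blast
        with False show ?thesis by blast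
      qed
    qed
  qed
  have "inj_on least (\<Union>C)"
  proof (rule inj_onI, rule ccontr)
    fix x y assume x: "x \<in> \<Union>C" and "y \<in> \<Union>C" and eq: "least x = least y" and "x \<noteq> y"
    then have "y \<in> least x - {x}"
      using in_least[of y] by simp
    then have "least y \<subseteq> least x - {x}"
      using least_minus_mem[OF x] by (auto simp: least_def)
    with eq in_least[of x] show False
      by blast
  qed
  moreover have "least ` \<Union>C \<subseteq> C"
    using least_mem by blast
  ultimately show ?thesis
    unfolding lepoll_def by blast
qed

text \<open>With \<open>r\<close> a well-order of \<open>N\<close> of order type \<open>|N|\<close>, every proper initial
  segment of \<open>r\<close> is smaller than \<open>N\<close> and hence in \<open>I\<close>; the initial segments in \<open>I\<close> form
  the required chain.\<close>
lemma max_chain_lepoll_least_non_member: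
  assumes N: "N \<notin> I" and least: "\<And>X. X \<notin> I \<Longrightarrow> N \<lesssim> X"
  obtains C where "is_max_chain I C" "C \<lesssim> N"
proof -
  define r where "r = |N|"
  interpret wo_rel r
    unfolding r_def wo_rel_def by (rule card_of_Well_order)
  have Field_r: "Field r = N"
    by (simp add: r_def Field_card_of)
  have underS_in: "underS a \<in> I" if "a \<in> N" for a
    using least card_of_underS[OF card_of_Card_order, of a N] that
    by (metis Field_card_of not_lepoll_iff_ordLess r_def)
  have under_in: "under a \<in> I" if "a \<in> N" for a
  proof -
    have "under a \<subseteq> insert a (underS a)"
      by (auto simp: under_def underS_def)
    then show ?thesis
      using ideal_subset insert_in_ideal underS_in[OF that] by blast
  qed
  define C where "C = {S. ofilter S \<and> S \<in> I}"
  have chain: "is_chain I C"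
    unfolding is_chain_def C_def using ofilter_linord by blast
  have "is_max_chain I C"
    unfolding is_max_chain_def
  proof (intro conjI allI impI chain)
    fix D assume D: "is_chain I D \<and> C \<subseteq> D"
    have "M \<in> C" if "M \<in> D" for M
    proof -
      have M: "M \<in> I"
        using D that unfolding is_chain_def by blast
      have "under a \<in> C" if "a \<in> N" for a
        using under_in[OF that] under_ofilter by (simp add: C_def)
      then have "under a \<subseteq> M \<or> M \<subseteq> under a" if "a \<in> Field r" for a
        using D \<open>M \<in> D\<close> that Field_r unfolding is_chain_def by blast
      moreover have "\<not> Field r \<subseteq> M"
        using M N Field_r ideal_subset by blast
      ultimately show ?thesis
        using ofilter_if_comparable_with_under M by (simp add: C_def)
    qed
    with D show "D = C" by blast
  qed
  moreover have "C \<subseteq> underS ` N"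
  proof
    fix S assume "S \<in> C"
    then have "ofilter S" "S \<noteq> N"
      using N by (auto simp: C_def)
    then show "S \<in> underS ` N"
      using ofilter_underS_Field Field_r by blast
  qed
  then have "C \<lesssim> N"
    using image_lepoll subset_imp_lepoll lepoll_trans by metis
  ultimately show ?thesis using that by blast
qed

lemma least_max_chain_eqpoll_least_non_member:
  "\<exists>C N. is_max_chain I C \<and> (\<forall>C'. is_max_chain I C' \<longrightarrow> C \<lesssim> C')
     \<and> N \<notin> I \<and> (\<forall>N'. N' \<notin> I \<longrightarrow> N \<lesssim> N') \<and> C \<approx> N"
proof -
  obtain N where N: "N \<notin> I" and least: "\<And>N'. N' \<notin> I \<Longrightarrow> N \<lesssim> N'"
    using exists_lepoll_least[of "\<lambda>X. X \<notin> I"] UNIV_notin_ideal by blast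
  obtain C where C: "is_max_chain I C" and "C \<lesssim> N"
    using max_chain_lepoll_least_non_member[OF N least] by blast
  have N_le: "N \<lesssim> C'" if "is_max_chain I C'" for C'
    using least[OF Union_max_chain_notin[OF that]] Union_max_chain_lepoll[OF that]
    by (rule lepoll_trans)
  show ?thesis
  proof (intro exI[of _ C] exI[of _ N] conjI allI impI)
    show "C \<lesssim> C'" if "is_max_chain I C'" for C'
      using \<open>C \<lesssim> N\<close> N_le[OF that] by (rule lepoll_trans)
    show "C \<approx> N"
      using \<open>C \<lesssim> N\<close> N_le[OF C] by (rule lepoll_antisym)
  qed (use C N least in auto)
qed

lemma max_antichain_singletons: "is_max_antichain (I - {{}}) (range (\<lambda>x. {x}))"
  unfolding is_max_antichain_def
proof (intro conjI allI impI)
  show "is_antichain (I - {{}}) (range (\<lambda>x. {x}))"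
    unfolding is_antichain_def by (auto simp: singleton_in_ideal)
  fix D assume D: "is_antichain (I - {{}}) D \<and> range (\<lambda>x. {x}) \<subseteq> D"
  have "d \<in> range (\<lambda>x. {x})" if d: "d \<in> D" for d
  proof -
    have "d \<noteq> {}"
      using D d unfolding is_antichain_def by blast
    then obtain x where x: "x \<in> d" by blast
    have "{x} \<in> D" using D by blast
    with D d x have "d = {x}"
      unfolding is_antichain_def by (metis empty_subsetI insert_subset)
    then show ?thesis by blast
  qed
  with D show "D = range (\<lambda>x. {x})" by blast
qed

end

locale ample_set_ideal = proper_set_ideal I for I :: "'a set set" +
  assumes disjoint_large_member: "X \<in> I \<Longrightarrow> \<exists>P\<in>I. P \<inter> X = {} \<and> (UNIV :: 'a set) \<lesssim> P"
begin

lemma infinite_UNIV: "infinite (UNIV :: 'a set)"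
proof
  assume fin: "finite (UNIV :: 'a set)"
  obtain P where P: "P \<in> I" "(UNIV :: 'a set) \<lesssim> P"
    using disjoint_large_member[OF singleton_in_ideal[of undefined]] by blast
  then obtain f :: "'a \<Rightarrow> 'a" where "inj f" "range f \<subseteq> P"
    unfolding lepoll_def by blast
  moreover have "range f = UNIV"
    using finite_UNIV_inj_surj[OF fin \<open>inj f\<close>] .
  ultimately have "P = UNIV"
    by auto
  with P(1) UNIV_notin_ideal show False
    by simp
qed

lemma max_antichain_separating_member:
  assumes A: "is_max_antichain (I - {{}}) A" and a: "a \<in> A" "p \<in> a"
    and R: "R \<in> I" "R \<noteq> {}" "R \<inter> a = {}"
    and no_trace: "\<And>b. b \<in> A \<Longrightarrow> b \<noteq> a \<Longrightarrow> \<not> b - a \<subseteq> R"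
  shows "\<exists>b\<in>A. (a - {p}) \<union> R \<subseteq> b \<and> p \<notin> b"
proof -
  define B where "B = (a - {p}) \<union> R"
  have "a \<in> I"
    using max_antichain_mem[OF A a(1)] by simp
  then have "B \<in> I"
    unfolding B_def using ideal_Un[OF ideal_subset R(1)] by blast
  moreover have "B \<noteq> {}"
    using R(2) by (simp add: B_def)
  ultimately obtain b where b: "b \<in> A" "b \<subseteq> B \<or> B \<subseteq> b"
    using max_antichain_comparable[OF A, of B] by blast
  have "p \<notin> B"
    using a(2) R(3) by (auto simp: B_def)
  have "\<not> b \<subseteq> B"
  proof
    assume "b \<subseteq> B"
    moreover from this have "b \<noteq> a"
      using a(2) \<open>p \<notin> B\<close> by blast
    ultimately show False
      using no_trace[OF b(1)] by (auto simp: B_def)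
  qed
  with b have sup: "B \<subseteq> b" by blast
  moreover have "p \<notin> b"
  proof
    assume "p \<in> b"
    with sup have "a \<subseteq> b"
      by (auto simp: B_def)
    then have "a = b"
      by (rule max_antichain_subset_imp_eq[OF A a(1) b(1)])
    with sup R(2,3) show False
      by (auto simp: B_def)
  qed
  ultimately show ?thesis
    using b(1) by (auto simp: B_def)
qed

text \<open>If \<open>A\<close> had fewer than \<open>|UNIV|\<close> members, removing one point of each member
  \<open>b \<noteq> a\<close> outside \<open>a\<close> from a large set \<open>P\<close> disjoint from \<open>a\<close> would leave a large set
  \<open>R\<close>, and the members separating the points of \<open>a\<close> all contain \<open>R\<close>.\<close>
lemma max_antichain_large_injection:
  assumes A: "is_max_antichain (I - {{}}) A" and small: "\<not> (UNIV :: 'a set) \<lesssim> A"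
    and a: "a \<in> A"
  obtains f where "inj_on f a" "f ` a \<subseteq> A" "\<And>p. p \<in> a \<Longrightarrow> (UNIV :: 'a set) \<lesssim> f p"
proof -
  have "a \<in> I"
    using max_antichain_mem[OF A a] by simp
  then obtain P where P: "P \<in> I" "P \<inter> a = {}" "(UNIV :: 'a set) \<lesssim> P"
    using disjoint_large_member by blast
  define q where "q b = (SOME x. x \<in> b - a)" for b
  have q: "q b \<in> b - a" if "b \<in> A" "b \<noteq> a" for b
  proof -
    have "\<not> b \<subseteq> a"
      using max_antichain_subset_imp_eq[OF A that(1) a] that(2) by blast
    then have "\<exists>x. x \<in> b - a"
      by blast
    then show ?thesis
      unfolding q_def by (rule someI_ex)
  qed
  define R where "R = P - q ` (A - {a})"
  have "q ` (A - {a}) \<lesssim> A"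
    by (rule lepoll_trans[OF image_lepoll subset_imp_lepoll]) blast
  then have "\<not> (UNIV :: 'a set) \<lesssim> q ` (A - {a})"
    using small lepoll_trans by metis
  then have large: "(UNIV :: 'a set) \<lesssim> R"
    unfolding R_def by (rule lepoll_Diff[OF infinite_UNIV P(3)])
  have "R \<in> I"
    unfolding R_def by (rule ideal_subset[OF P(1)]) blast
  moreover have "R \<noteq> {}"
    using large by (metis lepoll_empty_iff_empty UNIV_not_empty)
  moreover have "R \<inter> a = {}"
    using P(2) by (auto simp: R_def)
  moreover have "\<not> b - a \<subseteq> R" if "b \<in> A" "b \<noteq> a" for b
    using q[OF that] that by (auto simp: R_def)
  ultimately have separating: "\<exists>b\<in>A. (a - {p}) \<union> R \<subseteq> b \<and> p \<notin> b" if "p \<in> a" for p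
    by (rule max_antichain_separating_member[OF A a that])
  define f where "f p = (SOME b. b \<in> A \<and> (a - {p}) \<union> R \<subseteq> b \<and> p \<notin> b)" for p
  have f: "f p \<in> A \<and> (a - {p}) \<union> R \<subseteq> f p \<and> p \<notin> f p" if "p \<in> a" for p
  proof -
    have "\<exists>b. b \<in> A \<and> (a - {p}) \<union> R \<subseteq> b \<and> p \<notin> b"
      using separating[OF that] by blast
    then show ?thesis
      unfolding f_def by (rule someI_ex)
  qed
  show ?thesis
  proof (rule that)
    show "inj_on f a"
    proof (rule inj_onI, rule ccontr)
      fix p p' assume "p \<in> a" "p' \<in> a" "f p = f p'" "p \<noteq> p'"
      with f[of p] f[of p'] show False by blast
    qed
    show "f ` a \<subseteq> A"
      using f by blast
    show "(UNIV :: 'a set) \<lesssim> f p" if "p \<in> a" for p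
      using f[OF that] by (intro lepoll_trans[OF large subset_imp_lepoll]) blast
  qed
qed

lemma max_antichain_lepoll:
  assumes A: "is_max_antichain (I - {{}}) A"
  shows "(UNIV :: 'a set) \<lesssim> A"
proof (rule ccontr)
  assume small: "\<not> (UNIV :: 'a set) \<lesssim> A"
  have "{undefined} \<in> I - {{}}"
    using singleton_in_ideal by simp
  then obtain a where a: "a \<in> A"
    using max_antichain_comparable[OF A] by blast
  then obtain p where p: "p \<in> a"
    using max_antichain_mem[OF A] by blast
  obtain f where "inj_on f a" and f: "f ` a \<subseteq> A" "\<And>p. p \<in> a \<Longrightarrow> (UNIV :: 'a set) \<lesssim> f p"
    by (rule max_antichain_large_injection[OF A small a]) blast
  have "f p \<in> A"
    using f(1) p by blast
  then obtain g where "inj_on g (f p)" "g ` f p \<subseteq> A"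
    and "\<And>q. q \<in> f p \<Longrightarrow> (UNIV :: 'a set) \<lesssim> g q"
    by (rule max_antichain_large_injection[OF A small]) blast
  then have "f p \<lesssim> A"
    unfolding lepoll_def by blast
  with f(2)[OF p] have "(UNIV :: 'a set) \<lesssim> A"
    by (rule lepoll_trans)
  with small show False ..
qed

lemma least_max_antichain_eqpoll_UNIV:
  "\<exists>A. is_max_antichain (I - {{}}) A \<and> (\<forall>A'. is_max_antichain (I - {{}}) A' \<longrightarrow> A \<lesssim> A')
     \<and> A \<approx> (UNIV :: 'a set)"
proof (intro exI[of _ "range (\<lambda>x :: 'a. {x})"] conjI allI impI)
  show singletons: "range (\<lambda>x :: 'a. {x}) \<approx> (UNIV :: 'a set)"
    by (rule inj_on_image_eqpoll_self) simp
  show "is_max_antichain (I - {{}}) (range (\<lambda>x. {x}))"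
    by (rule max_antichain_singletons)
  show "range (\<lambda>x :: 'a. {x}) \<lesssim> A'" if "is_max_antichain (I - {{}}) A'" for A'
    using singletons max_antichain_lepoll[OF that] by (rule lepoll_trans1)
qed

end

section \<open>The meager ideal\<close>

interpretation meager: ample_set_ideal meager_ideal
proof unfold_locales
  show "A \<in> meager_ideal" if "B \<in> meager_ideal" "A \<subseteq> B" for A B
    using that meager_subset by (simp add: meager_ideal_def)
  show "A \<union> B \<in> meager_ideal" if "A \<in> meager_ideal" "B \<in> meager_ideal" for A B
    using that meager_Un by (simp add: meager_ideal_def)
  show "{x} \<in> meager_ideal" for x
    by (simp add: meager_ideal_def meager_singleton)
  show "UNIV \<notin> meager_ideal"
    by (simp add: meager_ideal_def not_meager_UNIV)
  show "\<exists>P\<in>meager_ideal. P \<inter> X = {} \<and> (UNIV :: (nat \<Rightarrow> bool) set) \<lesssim> P" if "X \<in> meager_ideal" for X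
  proof -
    have "meager X"
      using that by (simp add: meager_ideal_def)
    then obtain P where P: "meager P" "P \<inter> X = {}" "P \<approx> (UNIV :: (nat \<Rightarrow> bool) set)"
      by (rule meager_disjoint_eqpoll_UNIV)
    have "(UNIV :: (nat \<Rightarrow> bool) set) \<lesssim> P"
      by (rule eqpoll_imp_lepoll[OF eqpoll_sym[OF P(3)]])
    with P show ?thesis
      by (intro bexI[of _ P]) (simp_all add: meager_ideal_def)
  qed
qed

lemma mem_meager_ideal_iff: "A \<in> meager_ideal \<longleftrightarrow> meager A"
  by (simp add: meager_ideal_def)

theorem mainTheorem16:
  shows "(\<exists>C N. is_max_chain meager_ideal C
              \<and> (\<forall>C'. is_max_chain meager_ideal C' \<longrightarrow> C \<lesssim> C')
              \<and> \<not> meager N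
              \<and> (\<forall>N'. \<not> meager N' \<longrightarrow> N \<lesssim> N')
              \<and> C \<approx> N)
       \<and> (\<exists>A. is_max_antichain (meager_ideal - {{}}) A
              \<and> (\<forall>A'. is_max_antichain (meager_ideal - {{}}) A' \<longrightarrow> A \<lesssim> A')
              \<and> A \<approx> (UNIV :: (nat \<Rightarrow> bool) set))"
  using meager.least_max_chain_eqpoll_least_non_member meager.least_max_antichain_eqpoll_UNIV
  by (simp only: mem_meager_ideal_iff)

end
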